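(* Let $n\geq 0$ and $\beta\geq 2$ be integers and let $i\in\{1,2\}$. Then for every integer $\alpha\geq 0$, $$\overline{B}_{2^{2\alpha+1},3^\beta}(9n+3i)\equiv 0\pmod 4,$$ and for every integer $\alpha\geq 1$, $$\overline{B}_{2^{2\alpha},3^\beta}(9n+3i)\equiv 0\pmod 8.$$
   Context: An overpartition of a nonnegative integer $n$ is a partition of $n$ (a non-increasing sequence of positive integers summing to $n$) in which the first occurrence of each distinct part may be overlined. For relatively prime integers $\ell_1,\ell_2>1$, an $(\ell_1,\ell_2)$-biregular overpartition of $n$ is an overpartition of $n$ none of whose parts is divisible by $\ell_1$ or by $\ell_2$, and $\overline{B}_{\ell_1,\ell_2}(n)$ denotes the number of such overpartitions ($\overline{B}_{\ell_1,\ell_2}(0)=1$). Equivalently, writing $f_k=(q^k;q^k)_\infty=\prod_{m\ge1}(1-q^{km})$ for $|q|<1$, $$\sum_{n\ge0}\overline{B}_{\ell_1,\ell_2}(n)q^n=\frac{f_2\, f_{\ell_1}^2\, f_{\ell_2}^2\, f_{2\ell_1\ell_2}}{f_1^2\, f_{2\ell_1}\, f_{2\ell_2}\, f_{\ell_1\ell_2}^2}.$$ *)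

theory Defs
  imports Main "HOL-Library.Multiset"
begin

text \<open>An overpartition of n is represented as a pair (M, S): M is the multiset of
parts (positive integers summing to n) and S is the set of distinct parts whose
first occurrence is overlined (S is a subset of the distinct parts of M).\<close>

definition biregular_overpartitions :: "nat \<Rightarrow> nat \<Rightarrow> nat \<Rightarrow> (nat multiset \<times> nat set) set" where
  "biregular_overpartitions l1 l2 n =
     {(M, S). (\<forall>p\<in>#M. 0 < p \<and> \<not> l1 dvd p \<and> \<not> l2 dvd p)
              \<and> sum_mset M = n \<and> S \<subseteq> set_mset M}"

definition Bbar :: "nat \<Rightarrow> nat \<Rightarrow> nat \<Rightarrow> nat" where
  "Bbar l1 l2 n = card (biregular_overpartitions l1 l2 n)"

end

(*
  An overpartition count is the sum of 2^(number of distinct parts) over partitions, so modulo 8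
  it is 2 d(n) + 4 t(n): d(n) counts the admissible divisors of n (one-part partitions) and t(n)
  the partitions with exactly two distinct parts. When 3 exactly divides n, multiplying or dividing
  a divisor by 3 pairs up the admissible divisors; this gives the congruence modulo 4.

  Splitting off the parts divisible by c gives a convolution identity. For c = 3^beta, a multiple
  of 9, all arguments n - c k stay exactly divisible by 3, so by induction the biregular count
  agrees modulo 8 with the l-regular count. For c = l = r^2 the identity relates the l-regular count
  to the unrestricted overpartition number, which vanishes modulo 8, and to products of two factors
  each congruent to 2 (number of divisors) modulo 4. These divisor counts cannot both be odd:
  otherwise n - l k and k would be squares (up to the factor l), writing n as a sum of two squares,
  which is impossible when 3 exactly divides n. The unrestricted overpartition number vanishes
  modulo 8 by pairing the divisors d and n/d and comparing t(n) with the number of self-conjugate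
  two-part partitions.
*)

theory Submission
  imports Defs "HOL-Computational_Algebra.Primes" "HOL-Library.Z2" "HOL-Library.Disjoint_Sets"
begin

section \<open>Overpartitions with restricted parts\<close>

definition partitions_with :: "(nat \<Rightarrow> bool) \<Rightarrow> nat \<Rightarrow> nat multiset set" where
  "partitions_with P n = {M. (\<forall>p\<in>#M. 0 < p \<and> P p) \<and> sum_mset M = n}"

definition overpartitions_with :: "(nat \<Rightarrow> bool) \<Rightarrow> nat \<Rightarrow> (nat multiset \<times> nat set) set" where
  "overpartitions_with P n = {(M, S). M \<in> partitions_with P n \<and> S \<subseteq> set_mset M}"

definition overpartition_count :: "(nat \<Rightarrow> bool) \<Rightarrow> nat \<Rightarrow> nat" where
  "overpartition_count P n = card (overpartitions_with P n)"

lemma Bbar_eq_overpartition_count: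
  "Bbar l1 l2 n = overpartition_count (\<lambda>p. \<not> l1 dvd p \<and> \<not> l2 dvd p) n"
  by (simp add: Bbar_def overpartition_count_def overpartitions_with_def partitions_with_def
      biregular_overpartitions_def)

lemma size_le_sum_mset: "(\<And>p. p \<in># M \<Longrightarrow> 0 < p) \<Longrightarrow> size M \<le> sum_mset (M :: nat multiset)"
  by (induction M) fastforce+

lemma finite_partitions_with: "finite (partitions_with P n)"
proof (rule finite_subset)
  show "partitions_with P n \<subseteq> (\<Union>s\<le>n. multisets_of_size {1..n} s)"
  proof
    fix M assume "M \<in> partitions_with P n"
    then have pos: "\<And>p. p \<in># M \<Longrightarrow> 0 < p" and sum: "sum_mset M = n"
      by (auto simp: partitions_with_def)
    have "p \<le> n" if "p \<in># M" for p
      using that sum by (auto dest!: multi_member_split)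
    with pos have "set_mset M \<subseteq> {1..n}"
      by (auto simp: Suc_le_eq)
    moreover have "size M \<le> n"
      using size_le_sum_mset pos sum by blast
    ultimately show "M \<in> (\<Union>s\<le>n. multisets_of_size {1..n} s)"
      by (auto simp: multisets_of_size_def)
  qed
qed auto

lemma overpartitions_with_Sigma:
  "overpartitions_with P n = (SIGMA M:partitions_with P n. Pow (set_mset M))"
  by (auto simp: overpartitions_with_def)

lemma finite_overpartitions_with: "finite (overpartitions_with P n)"
  by (simp add: overpartitions_with_Sigma finite_partitions_with)

lemma overpartition_count_eq_sum:
  "overpartition_count P n = (\<Sum>M\<in>partitions_with P n. 2 ^ card (set_mset M))"
  by (simp add: overpartition_count_def overpartitions_with_Sigma finite_partitions_with card_Pow)

lemma overpartition_count_0 [simp]: "overpartition_count P 0 = 1"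
proof -
  have "partitions_with P 0 = {{#}}"
    by (auto simp: partitions_with_def) (metis multiset_nonemptyE neq0_conv)
  then show ?thesis
    by (simp add: overpartition_count_eq_sum)
qed

section \<open>Overpartition counts modulo 8\<close>

definition divisors_with :: "(nat \<Rightarrow> bool) \<Rightarrow> nat \<Rightarrow> nat set" where
  "divisors_with P n = {d. d dvd n \<and> P d}"

abbreviation divisors :: "nat \<Rightarrow> nat set" where
  "divisors n \<equiv> divisors_with (\<lambda>_. True) n"

lemma finite_divisors_with: "0 < n \<Longrightarrow> finite (divisors_with P n)"
  by (rule finite_subset[of _ "{..n}"]) (auto simp: divisors_with_def dest: dvd_imp_le)

text \<open>A tuple \<open>(p, j, q, k)\<close> encodes the partition with \<open>j\<close> parts \<open>p\<close> and \<open>k\<close> parts \<open>q\<close>.\<close>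

definition two_part_partitions :: "(nat \<Rightarrow> bool) \<Rightarrow> nat \<Rightarrow> (nat \<times> nat \<times> nat \<times> nat) set" where
  "two_part_partitions P n =
     {(p, j, q, k). 0 < p \<and> p < q \<and> 0 < j \<and> 0 < k \<and> P p \<and> P q \<and> j * p + k * q = n}"

lemma finite_two_part_partitions: "finite (two_part_partitions P n)"
proof (rule finite_subset)
  show "two_part_partitions P n \<subseteq> {..n} \<times> {..n} \<times> {..n} \<times> {..n}"
  proof (clarsimp simp: two_part_partitions_def)
    fix p j q k :: nat assume "0 < p" "p < q" "0 < j" "0 < k"
    then have "p \<le> j * p" "j \<le> j * p" "q \<le> k * q" "k \<le> k * q"
      by simp_all
    then show "p \<le> j * p + k * q \<and> j \<le> j * p + k * q \<and> q \<le> j * p + k * q \<and> k \<le> j * p + k * q"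
      by linarith
  qed
qed auto

lemma card_partitions_with_one_part:
  assumes "0 < n"
  shows "card {M \<in> partitions_with P n. card (set_mset M) = 1} = card (divisors_with P n)"
proof -
  let ?f = "\<lambda>d. replicate_mset (n div d) d"
  have pos: "0 < n div d" if "d \<in> divisors_with P n" for d
    using that assms by (auto simp: divisors_with_def)
  have inj: "inj_on ?f (divisors_with P n)"
    by (rule inj_onI) (metis pos in_replicate_mset)
  have image: "?f ` divisors_with P n = {M \<in> partitions_with P n. card (set_mset M) = 1}"
  proof (intro equalityI subsetI)
    fix M assume M: "M \<in> {M \<in> partitions_with P n. card (set_mset M) = 1}"
    then obtain p where p: "set_mset M = {p}"
      by (auto simp: card_1_singleton_iff)
    then have M_eq: "replicate_mset (count M p) p = M"
      by (metis count_replicate_mset count_eq_zero_iff multiset_eqI singletonD)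
    have "n = sum_mset M"
      using M by (simp add: partitions_with_def)
    also have "\<dots> = count M p * p"
      using arg_cong[OF M_eq, of sum_mset] by simp
    finally have "n = count M p * p" .
    moreover have "0 < p" "P p"
      using M p by (auto simp: partitions_with_def)
    ultimately have "p \<in> divisors_with P n"
      by (simp add: divisors_with_def)
    then have "?f p \<in> ?f ` divisors_with P n"
      by (rule imageI)
    moreover have "n div p = count M p"
      using \<open>n = count M p * p\<close> \<open>0 < p\<close> by simp
    ultimately show "M \<in> ?f ` divisors_with P n"
      using M_eq by metis
  next
    fix M assume "M \<in> ?f ` divisors_with P n"
    then obtain d where d: "d \<in> divisors_with P n" and M: "M = ?f d"
      by blast
    then have "d dvd n" "P d"
      by (simp_all add: divisors_with_def)
    moreover have "0 < d"
      using assms \<open>d dvd n\<close> by (rule dvd_pos_nat)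
    ultimately show "M \<in> {M \<in> partitions_with P n. card (set_mset M) = 1}"
      using pos[OF d] by (simp add: M partitions_with_def)
  qed
  show ?thesis
    unfolding image[symmetric] by (rule card_image[OF inj])
qed

lemma card_partitions_with_two_parts:
  "card {M \<in> partitions_with P n. card (set_mset M) = 2} = card (two_part_partitions P n)"
proof -
  let ?f = "\<lambda>(p, j, q, k). replicate_mset j p + replicate_mset k q"
  have inj: "inj_on ?f (two_part_partitions P n)"
  proof (rule inj_onI)
    fix x y assume x: "x \<in> two_part_partitions P n" and y: "y \<in> two_part_partitions P n"
      and eq: "?f x = ?f y"
    obtain p j q k p' j' q' k' where xy [simp]: "x = (p, j, q, k)" "y = (p', j', q', k')"
      by (cases x, cases y) auto
    from eq have "set_mset (?f x) = set_mset (?f y)"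
      by (rule arg_cong)
    with x y have "{p, q} = {p', q'}"
      by (auto simp: two_part_partitions_def)
    with x y have pq: "p = p'" "q = q'"
      by (auto simp: two_part_partitions_def doubleton_eq_iff)
    from eq have "count (?f x) p = count (?f y) p" "count (?f x) q = count (?f y) q"
      by simp_all
    with x y pq show "x = y"
      by (auto simp: two_part_partitions_def)
  qed
  have image: "?f ` two_part_partitions P n = {M \<in> partitions_with P n. card (set_mset M) = 2}"
  proof (intro equalityI subsetI)
    fix M assume M: "M \<in> {M \<in> partitions_with P n. card (set_mset M) = 2}"
    then obtain a b where "set_mset M = {a, b}" "a \<noteq> b"
      by (auto simp: card_2_iff)
    then obtain p q where pq: "set_mset M = {p, q}" "p < q"
      by (metis insert_commute linorder_neqE_nat)
    then have M_eq: "replicate_mset (count M p) p + replicate_mset (count M q) q = M"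
      by (intro multiset_eqI) (auto simp: count_eq_zero_iff)
    have "n = sum_mset M"
      using M by (simp add: partitions_with_def)
    also have "\<dots> = count M p * p + count M q * q"
      using arg_cong[OF M_eq, of sum_mset] by simp
    finally have "n = count M p * p + count M q * q" .
    moreover have "0 < p" "P p" "0 < q" "P q" "0 < count M p" "0 < count M q"
      using M pq by (auto simp: partitions_with_def)
    ultimately have "(p, count M p, q, count M q) \<in> two_part_partitions P n"
      using pq by (simp add: two_part_partitions_def)
    then have "?f (p, count M p, q, count M q) \<in> ?f ` two_part_partitions P n"
      by (rule imageI)
    then show "M \<in> ?f ` two_part_partitions P n"
      unfolding prod.case M_eq .
  qed (auto simp: partitions_with_def two_part_partitions_def)
  show ?thesis
    unfolding image[symmetric] by (rule card_image[OF inj])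
qed

lemma overpartition_count_mod_8:
  assumes "0 < n"
  obtains s where "overpartition_count P n =
    2 * card (divisors_with P n) + 4 * card (two_part_partitions P n) + 8 * s"
proof -
  let ?w = "\<lambda>M. (2::nat) ^ card (set_mset M)"
  let ?A = "\<lambda>i. {M \<in> partitions_with P n. card (set_mset M) = i}"
  let ?R = "{M \<in> partitions_with P n. 3 \<le> card (set_mset M)}"
  have "partitions_with P n = ?A 1 \<union> ?A 2 \<union> ?R"
  proof (intro equalityI subsetI)
    fix M assume M: "M \<in> partitions_with P n"
    then have "M \<noteq> {#}"
      using assms by (auto simp: partitions_with_def)
    then have "0 < card (set_mset M)"
      by (simp add: card_gt_0_iff)
    then have "card (set_mset M) = 1 \<or> card (set_mset M) = 2 \<or> 3 \<le> card (set_mset M)"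
      by linarith
    with M show "M \<in> ?A 1 \<union> ?A 2 \<union> ?R"
      by blast
  qed blast
  then have "overpartition_count P n = sum ?w (?A 1 \<union> ?A 2 \<union> ?R)"
    unfolding overpartition_count_eq_sum by (rule arg_cong)
  also have "\<dots> = sum ?w (?A 1) + sum ?w (?A 2) + sum ?w ?R"
    by (subst sum.union_disjoint; auto simp: finite_partitions_with)+
  also have "sum ?w (?A i) = 2 ^ i * card (?A i)" for i
    by (subst sum.cong[OF refl, where h = "\<lambda>_. 2 ^ i"]) auto
  finally have "overpartition_count P n = 2 * card (?A 1) + 4 * card (?A 2) + sum ?w ?R"
    by simp
  also have "\<dots> = 2 * card (divisors_with P n) + 4 * card (two_part_partitions P n) + sum ?w ?R"
    using card_partitions_with_one_part[OF assms] card_partitions_with_two_parts by simp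
  finally have count: "overpartition_count P n =
      2 * card (divisors_with P n) + 4 * card (two_part_partitions P n) + sum ?w ?R" .
  have "8 dvd sum ?w ?R"
  proof (rule dvd_sum)
    fix M assume "M \<in> ?R"
    then have "(2::nat) ^ 3 dvd ?w M"
      by (intro le_imp_power_dvd) simp
    then show "8 dvd ?w M"
      by simp
  qed
  then obtain s where "sum ?w ?R = 8 * s" ..
  with count show thesis
    by (intro that[of s]) simp
qed

lemma overpartition_count_mod_4:
  assumes "0 < n"
  obtains s where "overpartition_count P n = 2 * card (divisors_with P n) + 4 * s"
proof -
  obtain s where "overpartition_count P n =
      2 * card (divisors_with P n) + 4 * card (two_part_partitions P n) + 8 * s"
    using overpartition_count_mod_8[OF assms] .
  then show thesis
    by (intro that[of "card (two_part_partitions P n) + 2 * s"]) simp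
qed

section \<open>Separating the parts divisible by a modulus\<close>

fun join_overpartitions ::
    "nat \<Rightarrow> nat multiset \<times> nat set \<Rightarrow> nat multiset \<times> nat set \<Rightarrow> nat multiset \<times> nat set" where
  "join_overpartitions c (M1, S1) (M2, S2) = (M1 + image_mset ((*) c) M2, S1 \<union> (*) c ` S2)"

fun indivisible_part :: "nat \<Rightarrow> nat multiset \<times> nat set \<Rightarrow> nat multiset \<times> nat set" where
  "indivisible_part c (M, S) = (filter_mset (\<lambda>p. \<not> c dvd p) M, {p \<in> S. \<not> c dvd p})"

fun divisible_part :: "nat \<Rightarrow> nat multiset \<times> nat set \<Rightarrow> nat multiset \<times> nat set" where
  "divisible_part c (M, S) =
     (image_mset (\<lambda>p. p div c) (filter_mset (\<lambda>p. c dvd p) M), (\<lambda>p. p div c) ` {p \<in> S. c dvd p})"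

lemma sum_mset_image_mult: "sum_mset (image_mset ((*) c) M) = c * sum_mset (M :: nat multiset)"
  by (induction M) (simp_all add: algebra_simps)

lemma join_overpartitions_in:
  assumes "x \<in> overpartitions_with (\<lambda>p. P p \<and> \<not> c dvd p) m" "y \<in> overpartitions_with (\<lambda>p. P (c * p)) k"
    and "0 < c"
  shows "join_overpartitions c x y \<in> overpartitions_with P (m + c * k)"
  using assms by (cases x; cases y) (auto simp: overpartitions_with_def partitions_with_def sum_mset_image_mult)

lemma split_overpartitions_in:
  assumes "z \<in> overpartitions_with P n" and k: "k = sum_mset (fst (divisible_part c z))"
  shows "c * k \<le> n"
    and "indivisible_part c z \<in> overpartitions_with (\<lambda>p. P p \<and> \<not> c dvd p) (n - c * k)"
    and "divisible_part c z \<in> overpartitions_with (\<lambda>p. P (c * p)) k"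
proof -
  obtain M S where z: "z = (M, S)"
    by fastforce
  let ?D = "filter_mset (\<lambda>p. c dvd p) M"
  have D: "image_mset ((*) c) (image_mset (\<lambda>p. p div c) ?D) = ?D"
    by (induction M) auto
  have "M = filter_mset (\<lambda>p. \<not> c dvd p) M + ?D"
    by (metis add.commute multiset_partition)
  moreover have "sum_mset M = n"
    using assms(1) z by (simp add: overpartitions_with_def partitions_with_def)
  ultimately have "n = sum_mset (filter_mset (\<lambda>p. \<not> c dvd p) M) + sum_mset ?D"
    by (metis sum_mset.union)
  also have "sum_mset ?D = c * k"
    using k z D sum_mset_image_mult[of c "image_mset (\<lambda>p. p div c) ?D"] by simp
  finally have n: "n = sum_mset (filter_mset (\<lambda>p. \<not> c dvd p) M) + c * k" .
  then show "c * k \<le> n"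
    by simp
  show "indivisible_part c z \<in> overpartitions_with (\<lambda>p. P p \<and> \<not> c dvd p) (n - c * k)"
    using assms(1) z n by (auto simp: overpartitions_with_def partitions_with_def)
  show "divisible_part c z \<in> overpartitions_with (\<lambda>p. P (c * p)) k"
    using assms(1) z k by (auto simp: overpartitions_with_def partitions_with_def elim!: dvdE)
qed

lemma join_split_overpartitions:
  "join_overpartitions c (indivisible_part c z) (divisible_part c z) = z"
proof -
  obtain M S where z: "z = (M, S)"
    by fastforce
  have "image_mset ((*) c) (image_mset (\<lambda>p. p div c) (filter_mset (\<lambda>p. c dvd p) M)) =
      filter_mset (\<lambda>p. c dvd p) M"
    by (induction M) auto
  moreover have "{p \<in> S. \<not> c dvd p} \<union> (*) c ` (\<lambda>p. p div c) ` {p \<in> S. c dvd p} = S"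
    by (auto simp: image_image)
  ultimately show ?thesis
    using z by (simp add: add.commute flip: multiset_partition)
qed

lemma split_join_overpartitions:
  assumes "x \<in> overpartitions_with (\<lambda>p. P p \<and> \<not> c dvd p) m" and "0 < c"
  shows "indivisible_part c (join_overpartitions c x y) = x"
    and "divisible_part c (join_overpartitions c x y) = y"
proof -
  obtain M1 S1 M2 S2 where xy: "x = (M1, S1)" "y = (M2, S2)"
    by fastforce
  have M1: "\<forall>p\<in>#M1. \<not> c dvd p" "S1 \<subseteq> set_mset M1"
    using assms(1) xy by (auto simp: overpartitions_with_def partitions_with_def)
  then have "filter_mset (\<lambda>p. \<not> c dvd p) M1 = M1" "filter_mset ((dvd) c) M1 = {#}"
    by (simp_all add: filter_mset_eq_conv filter_mset_eq_mempty_iff)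
  moreover have "filter_mset (\<lambda>p. c dvd p) (image_mset ((*) c) M2) = image_mset ((*) c) M2"
    "filter_mset (\<lambda>p. \<not> c dvd p) (image_mset ((*) c) M2) = {#}"
    "image_mset (\<lambda>p. p div c) (image_mset ((*) c) M2) = M2"
    using assms(2) by (induction M2) auto
  moreover have "{p \<in> S1 \<union> (*) c ` S2. \<not> c dvd p} = S1" "{p \<in> S1 \<union> (*) c ` S2. c dvd p} = (*) c ` S2"
    using M1 by auto
  ultimately show "indivisible_part c (join_overpartitions c x y) = x"
    and "divisible_part c (join_overpartitions c x y) = y"
    using xy assms(2) by (simp_all add: image_image)
qed

lemma bij_betw_join_overpartitions:
  assumes "0 < c"
  shows "bij_betw (\<lambda>(k, x, y). join_overpartitions c x y)
    (SIGMA k:{..n div c}. overpartitions_with (\<lambda>p. P p \<and> \<not> c dvd p) (n - c * k) \<times>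
                          overpartitions_with (\<lambda>p. P (c * p)) k)
    (overpartitions_with P n)"
proof -
  let ?A = "SIGMA k:{..n div c}. overpartitions_with (\<lambda>p. P p \<and> \<not> c dvd p) (n - c * k) \<times>
                                 overpartitions_with (\<lambda>p. P (c * p)) k"
  let ?join = "\<lambda>(k, x, y). join_overpartitions c x y"
  let ?split = "\<lambda>z. (sum_mset (fst (divisible_part c z)), indivisible_part c z, divisible_part c z)"
  show ?thesis
  proof (rule bij_betw_byWitness[where f' = ?split])
    show "\<forall>a\<in>?A. ?split (?join a) = a"
    proof
      fix a assume "a \<in> ?A"
      then obtain k x y where a: "a = (k, x, y)"
        and x: "x \<in> overpartitions_with (\<lambda>p. P p \<and> \<not> c dvd p) (n - c * k)"
        and y: "y \<in> overpartitions_with (\<lambda>p. P (c * p)) k"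
        by blast
      have "sum_mset (fst y) = k"
        using y by (auto simp: overpartitions_with_def partitions_with_def)
      then show "?split (?join a) = a"
        using split_join_overpartitions[OF x assms] a by simp
    qed
    show "\<forall>z\<in>overpartitions_with P n. ?join (?split z) = z"
      by (simp add: join_split_overpartitions)
    show "?join ` ?A \<subseteq> overpartitions_with P n"
    proof (rule image_subsetI)
      fix a assume "a \<in> ?A"
      then obtain k x y where a: "a = (k, x, y)" and "k \<le> n div c"
        and x: "x \<in> overpartitions_with (\<lambda>p. P p \<and> \<not> c dvd p) (n - c * k)"
        and y: "y \<in> overpartitions_with (\<lambda>p. P (c * p)) k"
        by blast
      from \<open>k \<le> n div c\<close> have "c * k \<le> n"
        using assms by (simp add: less_eq_div_iff_mult_less_eq mult.commute)
      then show "?join a \<in> overpartitions_with P n"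
        using join_overpartitions_in[OF x y assms] a by simp
    qed
    show "?split ` overpartitions_with P n \<subseteq> ?A"
    proof (rule image_subsetI)
      fix z assume z: "z \<in> overpartitions_with P n"
      note split = split_overpartitions_in[OF z refl, of c]
      from split(1) have "sum_mset (fst (divisible_part c z)) \<le> n div c"
        using assms by (simp add: less_eq_div_iff_mult_less_eq mult.commute)
      with split(2,3) show "?split z \<in> ?A"
        by simp
    qed
  qed
qed

theorem overpartition_count_convolution:
  assumes "0 < c"
  shows "overpartition_count P n =
    (\<Sum>k\<le>n div c. overpartition_count (\<lambda>p. P p \<and> \<not> c dvd p) (n - c * k) *
                  overpartition_count (\<lambda>p. P (c * p)) k)"
proof -
  let ?A = "SIGMA k:{..n div c}. overpartitions_with (\<lambda>p. P p \<and> \<not> c dvd p) (n - c * k) \<times>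
                                 overpartitions_with (\<lambda>p. P (c * p)) k"
  have "overpartition_count P n = card ?A"
    unfolding overpartition_count_def
    using bij_betw_same_card[OF bij_betw_join_overpartitions[OF assms, of n P]] by simp
  also have "\<dots> = (\<Sum>k\<le>n div c. overpartition_count (\<lambda>p. P p \<and> \<not> c dvd p) (n - c * k) *
                  overpartition_count (\<lambda>p. P (c * p)) k)"
    by (simp add: card_SigmaI finite_overpartitions_with card_cartesian_product overpartition_count_def)
  finally show ?thesis .
qed

lemma dvd_overpartition_count_remove_multiples:
  assumes "0 < c" and "m dvd overpartition_count P n"
    and "\<And>k. 0 < k \<Longrightarrow> c * k \<le> n \<Longrightarrow>
       m dvd overpartition_count (\<lambda>p. P p \<and> \<not> c dvd p) (n - c * k) * overpartition_count (\<lambda>p. P (c * p)) k"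
  shows "m dvd overpartition_count (\<lambda>p. P p \<and> \<not> c dvd p) n"
proof -
  have "overpartition_count P n = overpartition_count (\<lambda>p. P p \<and> \<not> c dvd p) n +
      (\<Sum>k\<in>{1..n div c}. overpartition_count (\<lambda>p. P p \<and> \<not> c dvd p) (n - c * k) *
                        overpartition_count (\<lambda>p. P (c * p)) k)"
    unfolding overpartition_count_convolution[OF assms(1), of P n] atMost_atLeast0
    by (simp add: sum.atLeast_Suc_atMost)
  moreover have "m dvd (\<Sum>k\<in>{1..n div c}. overpartition_count (\<lambda>p. P p \<and> \<not> c dvd p) (n - c * k) *
                        overpartition_count (\<lambda>p. P (c * p)) k)"
  proof (rule dvd_sum)
    fix k assume "k \<in> {1..n div c}"
    then have "0 < k" "c * k \<le> n"
      using assms(1) by (auto simp: less_eq_div_iff_mult_less_eq mult.commute)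
    then show "m dvd overpartition_count (\<lambda>p. P p \<and> \<not> c dvd p) (n - c * k) *
        overpartition_count (\<lambda>p. P (c * p)) k"
      by (rule assms(3))
  qed
  ultimately show ?thesis
    using assms(2) by (simp add: dvd_add_left_iff)
qed

section \<open>Parity of divisor counts\<close>

text \<open>Summing \<open>1\<close> in the two-element field, each orbit \<open>{x, h x}\<close> contributes \<open>1 + 1 = 0\<close>.\<close>

lemma even_card_fixpoint_free_involution:
  assumes "\<And>x. x \<in> X \<Longrightarrow> h x \<in> X" "\<And>x. x \<in> X \<Longrightarrow> h (h x) = x"
    and "\<And>x. x \<in> X \<Longrightarrow> h x \<noteq> x"
  shows "even (card X)"
proof -
  have "(\<Sum>x\<in>X. 1 :: bit) = 0"
    by (rule sum_involution_eq_0[where h = h]) (use assms in simp_all)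
  moreover have "of_nat k = (0 :: bit) \<Longrightarrow> even k" for k
    by (induction k) auto
  ultimately show ?thesis
    by simp
qed

lemma even_card_iff_even_card_fixpoints:
  assumes "finite X" "\<And>x. x \<in> X \<Longrightarrow> h x \<in> X" "\<And>x. x \<in> X \<Longrightarrow> h (h x) = x"
  shows "even (card X) \<longleftrightarrow> even (card {x \<in> X. h x = x})"
proof -
  have "even (card {x \<in> X. h x \<noteq> x})"
    by (rule even_card_fixpoint_free_involution[where h = h]) (use assms in auto)
  moreover have "card X = card {x \<in> X. h x = x} + card {x \<in> X. h x \<noteq> x}"
    using assms(1) by (subst card_Un_disjoint[symmetric]) (auto intro: arg_cong[where f = card])
  ultimately show ?thesis
    by simp
qed

lemma complementary_divisor:
  fixes n d :: nat
  assumes "0 < n" "d dvd n"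
  shows "n div d dvd n" "n div (n div d) = d"
proof -
  obtain k where n: "n = d * k"
    using assms(2) ..
  with assms(1) have "0 < d" "0 < k"
    by simp_all
  with n show "n div d dvd n" "n div (n div d) = d"
    by simp_all
qed

lemma card_divisors_swap:
  assumes "0 < n"
  shows "card {d \<in> divisors n. Q d (n div d)} = card {d \<in> divisors n. Q (n div d) d}"
  by (rule bij_betw_same_card[of "\<lambda>d. n div d"], rule bij_betw_byWitness[where f' = "\<lambda>d. n div d"])
    (use assms complementary_divisor in \<open>auto simp: divisors_with_def\<close>)

lemma even_card_divisors_if_not_square:
  assumes "0 < n" "\<And>a. n \<noteq> a * a"
  shows "even (card (divisors n))"
proof (rule even_card_fixpoint_free_involution[where h = "\<lambda>d. n div d"])
  fix d assume "d \<in> divisors n"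
  then have d: "d dvd n"
    by (simp add: divisors_with_def)
  show "n div d \<in> divisors n" "n div (n div d) = d"
    using complementary_divisor[OF assms(1) d] by (simp_all add: divisors_with_def)
  show "n div d \<noteq> d"
    using assms d by (metis dvd_mult_div_cancel)
qed

lemma even_card_divisors_with_exact_prime:
  fixes p :: nat
  assumes "prime p" "p dvd n" "\<not> p ^ 2 dvd n" "0 < n"
    and closed: "\<And>d. p * d dvd n \<Longrightarrow> P (p * d) = P d"
  shows "even (card (divisors_with P n))"
proof -
  let ?h = "\<lambda>d. if p dvd d then d div p else p * d"
  have "p > 1"
    using assms(1) by (rule prime_gt_1_nat)
  have h: "?h d \<in> divisors_with P n \<and> ?h (?h d) = d \<and> ?h d \<noteq> d" if "d \<in> divisors_with P n" for d
  proof -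
    from that have d: "d dvd n" "P d"
      by (simp_all add: divisors_with_def)
    have "d > 0"
      using assms(4) d(1) by (rule dvd_pos_nat)
    show ?thesis
    proof (cases "p dvd d")
      case True
      then obtain e where e: "d = p * e" ..
      have "\<not> p dvd e"
      proof
        assume "p dvd e"
        then have "p ^ 2 dvd d"
          using e by (simp add: power2_eq_square)
        with d(1) assms(3) show False
          using dvd_trans by blast
      qed
      then show ?thesis
        using e d closed[of e] \<open>p > 1\<close> \<open>d > 0\<close> by (auto simp: divisors_with_def dvd_mult_right)
    next
      case False
      then have "coprime p d"
        using assms(1) by (simp add: prime_imp_coprime)
      then have "p * d dvd n"
        using assms(2) d(1) by (simp add: divides_mult)
      then show ?thesis
        using False d closed[of d] \<open>p > 1\<close> \<open>d > 0\<close> by (simp add: divisors_with_def)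
    qed
  qed
  show ?thesis
    by (rule even_card_fixpoint_free_involution[where h = ?h]) (use h in blast)+
qed

lemma not_sum_two_squares_if_exact_3:
  fixes n x y :: nat
  assumes "3 dvd n" "\<not> 9 dvd n"
  shows "n \<noteq> x * x + y * y"
proof
  assume n: "n = x * x + y * y"
  have square_mod_3: "z * z mod 3 = (if 3 dvd z then 0 else 1)" for z :: nat
  proof -
    have "z mod 3 < 3"
      by simp
    then have "z mod 3 = 0 \<or> z mod 3 = 1 \<or> z mod 3 = 2"
      by linarith
    moreover have "z * z mod 3 = (z mod 3) * (z mod 3) mod 3"
      by (simp add: mod_mult_eq)
    ultimately show ?thesis
      by (elim disjE) (simp_all add: dvd_eq_mod_eq_0)
  qed
  have "(x * x mod 3 + y * y mod 3) mod 3 = n mod 3"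
    unfolding n by (rule mod_add_eq)
  also have "\<dots> = 0"
    using assms(1) by simp
  finally have "3 dvd x \<and> 3 dvd y"
    unfolding square_mod_3 by (simp split: if_splits)
  then obtain a b where "x = 3 * a" "y = 3 * b"
    by (auto elim!: dvdE)
  with n have "n = 9 * (a * a + b * b)"
    by simp
  with assms(2) show False
    by simp
qed

lemma divisors_dvd_image_mult:
  fixes l m :: nat
  assumes "0 < l"
  shows "{d \<in> divisors (l * m). l dvd d} = (*) l ` divisors m"
proof (intro equalityI subsetI)
  fix d assume "d \<in> {d \<in> divisors (l * m). l dvd d}"
  then have "l dvd d" "d dvd l * m"
    by (simp_all add: divisors_with_def)
  from \<open>l dvd d\<close> obtain e where "d = l * e" ..
  with \<open>d dvd l * m\<close> assms show "d \<in> (*) l ` divisors m"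
    by (simp add: divisors_with_def)
next
  fix d assume "d \<in> (*) l ` divisors m"
  then show "d \<in> {d \<in> divisors (l * m). l dvd d}"
    by (auto simp: divisors_with_def)
qed

lemma even_card_divisors_not_dvd:
  fixes l n :: nat
  assumes "0 < n" "\<And>a. n \<noteq> a * a" "0 < l" "\<And>a. l dvd n \<Longrightarrow> n div l \<noteq> a * a"
  shows "even (card (divisors_with (\<lambda>d. \<not> l dvd d) n))"
proof -
  let ?A = "divisors_with (\<lambda>d. \<not> l dvd d) n"
  let ?B = "{d \<in> divisors n. l dvd d}"
  have "divisors n = ?A \<union> ?B" "?A \<inter> ?B = {}"
    by (auto simp: divisors_with_def)
  moreover have "finite ?A" "finite ?B"
    using finite_divisors_with[OF assms(1)] by simp_all
  ultimately have "card (divisors n) = card ?A + card ?B"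
    by (metis card_Un_disjoint)
  moreover have "even (card (divisors n))"
    using assms(1,2) by (rule even_card_divisors_if_not_square)
  moreover have "even (card ?B)"
  proof (cases "l dvd n")
    case True
    then obtain m where m: "n = l * m" ..
    with assms(1) have "0 < m"
      by simp
    have "\<And>a. m \<noteq> a * a"
      using assms(3,4) True m by simp
    with \<open>0 < m\<close> have "even (card (divisors m))"
      by (rule even_card_divisors_if_not_square)
    moreover have "card ?B = card (divisors m)"
      unfolding m divisors_dvd_image_mult[OF assms(3)]
      using assms(3) by (simp add: card_image inj_on_def)
    ultimately show ?thesis
      by simp
  next
    case False
    then have "?B = {}"
      by (auto simp: divisors_with_def dest: dvd_trans)
    then show ?thesis
      by (metis card.empty even_zero)
  qed
  ultimately show ?thesis
    by simp
qed

section \<open>Conjugation of two-part partitions\<close>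

text \<open>Conjugating the Ferrers diagram, \<open>j\<close> parts \<open>p\<close> and \<open>k\<close> parts \<open>q > p\<close> become \<open>q - p\<close> parts
  \<open>k\<close> and \<open>p\<close> parts \<open>j + k\<close>.\<close>

definition conjugate_two_part :: "nat \<times> nat \<times> nat \<times> nat \<Rightarrow> nat \<times> nat \<times> nat \<times> nat" where
  "conjugate_two_part = (\<lambda>(p, j, q, k). (k, q - p, j + k, p))"

lemma conjugate_two_part_in:
  assumes "x \<in> two_part_partitions (\<lambda>_. True) n"
  shows "conjugate_two_part x \<in> two_part_partitions (\<lambda>_. True) n"
proof -
  obtain p j q k where x: "x = (p, j, q, k)" "0 < p" "p < q" "0 < j" "0 < k" "j * p + k * q = n"
    using assms by (auto simp: two_part_partitions_def)
  then obtain r where "q = p + r" "0 < r"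
    using less_imp_add_positive by blast
  with x show ?thesis
    by (auto simp: conjugate_two_part_def two_part_partitions_def algebra_simps)
qed

lemma conjugate_conjugate_two_part:
  "x \<in> two_part_partitions P n \<Longrightarrow> conjugate_two_part (conjugate_two_part x) = x"
  by (auto simp: two_part_partitions_def conjugate_two_part_def)

lemma self_conjugate_two_part_iff:
  "x \<in> two_part_partitions P n \<and> conjugate_two_part x = x \<longleftrightarrow>
    (\<exists>p j. x = (p, j, p + j, p) \<and> 0 < p \<and> 0 < j \<and> P p \<and> P (p + j) \<and> p * (p + 2 * j) = n)"
  by (cases x) (auto simp: two_part_partitions_def conjugate_two_part_def algebra_simps)

lemma card_self_conjugate_two_part:
  assumes "0 < n"
  shows "card {x \<in> two_part_partitions (\<lambda>_. True) n. conjugate_two_part x = x} =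
    card {d \<in> divisors n. d < n div d \<and> even (d + n div d)}"
proof (rule bij_betw_same_card, rule bij_betw_byWitness[where f = fst
      and f' = "\<lambda>d. (d, (n div d - d) div 2, (n div d + d) div 2, d)"])
  let ?F = "{x \<in> two_part_partitions (\<lambda>_. True) n. conjugate_two_part x = x}"
  let ?L = "{d \<in> divisors n. d < n div d \<and> even (d + n div d)}"
  have F: "x \<in> ?F \<longleftrightarrow> (\<exists>p j. x = (p, j, p + j, p) \<and> 0 < p \<and> 0 < j \<and> p * (p + 2 * j) = n)" for x
    using self_conjugate_two_part_iff[of x "\<lambda>_. True" n] by simp
  have L: "d \<in> ?L \<longleftrightarrow> (\<exists>j. 0 < d \<and> 0 < j \<and> d * (d + 2 * j) = n)" for d
  proof
    assume "d \<in> ?L"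
    then have "d dvd n" "d < n div d" "even (d + n div d)"
      by (auto simp: divisors_with_def)
    moreover have "m = d + 2 * ((m - d) div 2) \<and> 0 < (m - d) div 2" if "d < m" "even (d + m)" for m
      using that by presburger
    ultimately obtain j where "n div d = d + 2 * j" "0 < j"
      by blast
    moreover have "0 < d"
      using assms \<open>d dvd n\<close> by (rule dvd_pos_nat)
    ultimately show "\<exists>j. 0 < d \<and> 0 < j \<and> d * (d + 2 * j) = n"
      using \<open>d dvd n\<close> by (metis dvd_mult_div_cancel)
  next
    assume "\<exists>j. 0 < d \<and> 0 < j \<and> d * (d + 2 * j) = n"
    then obtain j where "0 < d" "0 < j" "n = d * (d + 2 * j)"
      by auto
    then show "d \<in> ?L"
      by (simp add: divisors_with_def)
  qed
  have pair: "n div p = p + 2 * j" "(n div p - p) div 2 = j" "(n div p + p) div 2 = p + j"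
    if "0 < p" "p * (p + 2 * j) = n" for p j
    using that by auto
  show "\<forall>x\<in>?F. (fst x, (n div fst x - fst x) div 2, (n div fst x + fst x) div 2, fst x) = x"
    using F pair by auto
  show "\<forall>d\<in>?L. fst (d, (n div d - d) div 2, (n div d + d) div 2, d) = d"
    by simp
  show "fst ` ?F \<subseteq> ?L"
    using F L by auto
  show "(\<lambda>d. (d, (n div d - d) div 2, (n div d + d) div 2, d)) ` ?L \<subseteq> ?F"
    using F L pair by auto
qed

lemma even_card_two_part_partitions_iff:
  assumes "0 < n"
  shows "even (card (two_part_partitions (\<lambda>_. True) n)) \<longleftrightarrow>
    even (card {d \<in> divisors n. d < n div d \<and> even (d + n div d)})"
proof -
  have "even (card (two_part_partitions (\<lambda>_. True) n)) \<longleftrightarrow>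
      even (card {x \<in> two_part_partitions (\<lambda>_. True) n. conjugate_two_part x = x})"
    by (rule even_card_iff_even_card_fixpoints)
      (simp_all add: finite_two_part_partitions conjugate_two_part_in conjugate_conjugate_two_part)
  then show ?thesis
    using card_self_conjugate_two_part[OF assms] by simp
qed

lemma card_divisors_if_not_square:
  assumes "0 < n" "\<And>a. n \<noteq> a * a"
  shows "card (divisors n) = 2 * card {d \<in> divisors n. d < n div d \<and> even (d + n div d)} +
    card {d \<in> divisors n. odd (d + n div d)}"
proof -
  let ?L = "{d \<in> divisors n. d < n div d \<and> even (d + n div d)}"
  let ?H = "{d \<in> divisors n. n div d < d \<and> even (d + n div d)}"
  let ?O = "{d \<in> divisors n. odd (d + n div d)}"
  have "d \<noteq> n div d" if "d \<in> divisors n" for d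
  proof
    assume "d = n div d"
    with that have "n = d * d"
      by (metis divisors_with_def dvd_mult_div_cancel mem_Collect_eq)
    with assms(2) show False
      by blast
  qed
  then have split: "divisors n = ?L \<union> ?H \<union> ?O"
    by (auto simp: linorder_neq_iff)
  have "card (?L \<union> ?H \<union> ?O) = card ?L + card ?H + card ?O"
    using finite_divisors_with[OF assms(1)] by (simp add: card_Un_disjoint disjoint_iff)
  moreover have "card ?H = card ?L"
    using card_divisors_swap[OF assms(1), of "\<lambda>a b. a < b \<and> even (a + b)"] by (simp add: add.commute)
  ultimately show ?thesis
    by (simp only: split[symmetric])
qed

lemma four_dvd_card_divisors_odd_sum:
  assumes "3 dvd n" "\<not> 9 dvd n"
  shows "4 dvd card {d \<in> divisors n. odd (d + n div d)}"
proof -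
  have "0 < n"
    using assms(2) by (auto intro: gr0I)
  let ?A = "{d \<in> divisors n. odd d \<and> even (n div d)}"
  let ?B = "{d \<in> divisors n. odd (n div d) \<and> even d}"
  have "{d \<in> divisors n. odd (d + n div d)} = ?A \<union> ?B"
    by auto
  then have "card {d \<in> divisors n. odd (d + n div d)} = card ?A + card ?B"
    using finite_divisors_with[OF \<open>0 < n\<close>] by (simp add: card_Un_disjoint disjoint_iff)
  moreover have "card ?B = card ?A"
    using card_divisors_swap[OF \<open>0 < n\<close>, of "\<lambda>a b. odd a \<and> even b"] by simp
  moreover have "even (card (divisors_with (\<lambda>d. odd d \<and> even (n div d)) n))"
  proof (rule even_card_divisors_with_exact_prime[of 3])
    fix d assume "3 * d dvd n"
    then obtain e where "n = 3 * d * e" ..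
    then have "n div d = 3 * (n div (3 * d))"
      using \<open>0 < n\<close> by simp
    then show "(odd (3 * d) \<and> even (n div (3 * d))) = (odd d \<and> even (n div d))"
      by simp
  qed (use assms \<open>0 < n\<close> in simp_all)
  then obtain w where "card (divisors_with (\<lambda>d. odd d \<and> even (n div d)) n) = 2 * w" ..
  moreover have "?A = divisors_with (\<lambda>d. odd d \<and> even (n div d)) n"
    by (auto simp: divisors_with_def)
  ultimately have "card {d \<in> divisors n. odd (d + n div d)} = 4 * w"
    by simp
  then show ?thesis
    by simp
qed

lemma eight_dvd_overpartition_count:
  fixes n :: nat
  assumes "3 dvd n" "\<not> 9 dvd n"
  shows "8 dvd overpartition_count (\<lambda>_. True) n"
proof -
  have "0 < n"
    using assms(2) by (auto intro: gr0I)
  let ?T = "two_part_partitions (\<lambda>_. True) n"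
  let ?L = "{d \<in> divisors n. d < n div d \<and> even (d + n div d)}"
  let ?O = "{d \<in> divisors n. odd (d + n div d)}"
  have "card (divisors n) = 2 * card ?L + card ?O"
    using \<open>0 < n\<close> not_sum_two_squares_if_exact_3[OF assms, of _ 0]
    by (intro card_divisors_if_not_square) auto
  moreover obtain s where "overpartition_count (\<lambda>_. True) n = 2 * card (divisors n) + 4 * card ?T + 8 * s"
    using overpartition_count_mod_8[OF \<open>0 < n\<close>] .
  moreover have "even (card ?T + card ?L)"
    using even_card_two_part_partitions_iff[OF \<open>0 < n\<close>] by simp
  then obtain u where "card ?T + card ?L = 2 * u" ..
  moreover obtain v where "card ?O = 4 * v"
    using four_dvd_card_divisors_odd_sum[OF assms] ..
  ultimately have "overpartition_count (\<lambda>_. True) n = 8 * (u + v + s)"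
    by simp
  then show ?thesis
    by simp
qed

lemma even_card_divisors_complementary_pair:
  fixes n r k :: nat
  assumes "3 dvd n" "\<not> 9 dvd n" "\<not> 3 dvd r" "0 < k" "r * r * k < n"
  shows "even (card (divisors_with (\<lambda>p. \<not> r * r dvd p) (n - r * r * k)) * card (divisors k))"
proof (cases "\<exists>s. k = s * s")
  case True
  let ?m = "n - r * r * k"
  obtain s where s: "k = s * s"
    using True ..
  have n: "n = ?m + (r * s) * (r * s)"
    using assms(5) s by (simp add: algebra_simps)
  have "0 < r * r"
    using assms(3) by (auto intro: gr0I)
  have "even (card (divisors_with (\<lambda>p. \<not> r * r dvd p) ?m))"
  proof (rule even_card_divisors_not_dvd[OF _ _ \<open>0 < r * r\<close>])
    show "0 < ?m"
      using assms(5) by simp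
    show "?m \<noteq> t * t" for t
      using not_sum_two_squares_if_exact_3[OF assms(1,2), of t "r * s"] n by auto
    show "?m div (r * r) \<noteq> t * t" if "r * r dvd ?m" for t
    proof
      assume "?m div (r * r) = t * t"
      with that have "?m = (r * t) * (r * t)"
        by (metis dvd_div_mult_self mult.assoc mult.commute mult.left_commute)
      with n not_sum_two_squares_if_exact_3[OF assms(1,2), of "r * t" "r * s"] show False
        by simp
    qed
  qed
  then show ?thesis
    by simp
next
  case False
  with assms(4) have "even (card (divisors k))"
    by (intro even_card_divisors_if_not_square) auto
  then show ?thesis
    by simp
qed

lemma eight_dvd_square_regular_overpartition_count:
  fixes n r :: nat
  assumes "3 dvd n" "\<not> 9 dvd n" "\<not> 3 dvd r"
  shows "8 dvd overpartition_count (\<lambda>p. \<not> r * r dvd p) n"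
proof -
  have "0 < r * r"
    using assms(3) by (auto intro: gr0I)
  have step: "8 dvd overpartition_count (\<lambda>p. \<not> r * r dvd p) (n - r * r * k) *
      overpartition_count (\<lambda>_. True) k" if k: "0 < k" "r * r * k \<le> n" for k
  proof (cases "n = r * r * k")
    case True
    with assms have "3 dvd k" "\<not> 9 dvd k"
      by (auto simp: prime_dvd_mult_iff dest: dvd_mult_right)
    then show ?thesis
      by (simp add: eight_dvd_overpartition_count)
  next
    case False
    let ?m = "n - r * r * k"
    have "0 < ?m"
      using False k by simp
    obtain a where a: "overpartition_count (\<lambda>p. \<not> r * r dvd p) ?m =
        2 * card (divisors_with (\<lambda>p. \<not> r * r dvd p) ?m) + 4 * a"
      using overpartition_count_mod_4[OF \<open>0 < ?m\<close>] .
    obtain b where b: "overpartition_count (\<lambda>_. True) k = 2 * card (divisors k) + 4 * b"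
      using overpartition_count_mod_4[OF k(1)] .
    have "even (card (divisors_with (\<lambda>p. \<not> r * r dvd p) ?m) * card (divisors k))"
      using False k by (intro even_card_divisors_complementary_pair[OF assms]) auto
    then show ?thesis
      unfolding a b by (auto elim!: evenE simp: algebra_simps)
  qed
  have "8 dvd overpartition_count (\<lambda>p. True \<and> \<not> r * r dvd p) n"
    by (rule dvd_overpartition_count_remove_multiples[OF \<open>0 < r * r\<close>
          eight_dvd_overpartition_count[OF assms(1,2)]]) (simp add: step)
  then show ?thesis
    by simp
qed

lemma eight_dvd_biregular_overpartition_count:
  fixes n r c :: nat
  assumes "\<not> 3 dvd r" "9 dvd c" "0 < c"
  shows "3 dvd n \<Longrightarrow> \<not> 9 dvd n \<Longrightarrow> 8 dvd overpartition_count (\<lambda>p. \<not> r * r dvd p \<and> \<not> c dvd p) n"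
proof (induction n rule: less_induct)
  case (less n)
  show ?case
  proof (rule dvd_overpartition_count_remove_multiples[OF assms(3)])
    show "8 dvd overpartition_count (\<lambda>p. \<not> r * r dvd p) n"
      using less.prems assms(1) by (rule eight_dvd_square_regular_overpartition_count)
    fix k assume k: "0 < k" "c * k \<le> n"
    have "9 dvd c * k"
      using assms(2) by simp
    then have "3 dvd c * k"
      by (rule dvd_trans[rotated]) simp
    with less.prems(1) have "3 dvd n - c * k"
      by (rule dvd_diff_nat)
    moreover have "\<not> 9 dvd n - c * k"
    proof
      assume "9 dvd n - c * k"
      then have "9 dvd n - c * k + c * k"
        using \<open>9 dvd c * k\<close> by (rule dvd_add)
      with k(2) less.prems(2) show False
        by simp
    qed
    moreover have "n - c * k < n"
      using k(1) assms(3) less.prems(2) by (intro diff_less) (auto intro: gr0I)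
    ultimately show "8 dvd overpartition_count (\<lambda>p. \<not> r * r dvd p \<and> \<not> c dvd p) (n - c * k) *
        overpartition_count (\<lambda>p. \<not> r * r dvd c * p) k"
      using less.IH by simp
  qed
qed

lemma four_dvd_biregular_overpartition_count:
  fixes n l c :: nat
  assumes "\<not> 3 dvd l" "9 dvd c" "3 dvd n" "\<not> 9 dvd n"
  shows "4 dvd overpartition_count (\<lambda>p. \<not> l dvd p \<and> \<not> c dvd p) n"
proof -
  have "0 < n"
    using assms(4) by (auto intro: gr0I)
  have "coprime 3 l"
    using assms(1) by (simp add: prime_imp_coprime)
  have "even (card (divisors_with (\<lambda>p. \<not> l dvd p \<and> \<not> c dvd p) n))"
  proof (rule even_card_divisors_with_exact_prime[of 3])
    fix d assume "3 * d dvd n"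
    then have "\<not> c dvd 3 * d" "\<not> c dvd d"
      using assms(2,4) by (meson dvd_trans dvd_triv_right)+
    moreover have "l dvd 3 * d \<longleftrightarrow> l dvd d"
      using \<open>coprime 3 l\<close> by (simp add: coprime_commute coprime_dvd_mult_right_iff)
    ultimately show "(\<not> l dvd 3 * d \<and> \<not> c dvd 3 * d) = (\<not> l dvd d \<and> \<not> c dvd d)"
      by simp
  qed (use assms \<open>0 < n\<close> in simp_all)
  moreover obtain s where "overpartition_count (\<lambda>p. \<not> l dvd p \<and> \<not> c dvd p) n =
      2 * card (divisors_with (\<lambda>p. \<not> l dvd p \<and> \<not> c dvd p) n) + 4 * s"
    using overpartition_count_mod_4[OF \<open>0 < n\<close>] .
  ultimately show ?thesis
    by (auto elim!: evenE)
qed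

theorem theorem3:
  fixes n \<beta> :: nat and i :: nat
  assumes "\<beta> \<ge> 2" and "i \<in> {1, 2}"
  shows "(\<forall>\<alpha>::nat. Bbar (2 ^ (2 * \<alpha> + 1)) (3 ^ \<beta>) (9 * n + 3 * i) mod 4 = 0)
       \<and> (\<forall>\<alpha>::nat. \<alpha> \<ge> 1 \<longrightarrow> Bbar (2 ^ (2 * \<alpha>)) (3 ^ \<beta>) (9 * n + 3 * i) mod 8 = 0)"
proof -
  have n: "3 dvd 9 * n + 3 * i" "\<not> 9 dvd 9 * n + 3 * i"
    using assms(2) by (auto simp: dvd_add_right_iff)
  have "(3::nat) ^ 2 dvd 3 ^ \<beta>"
    using assms(1) by (rule le_imp_power_dvd)
  then have c: "9 dvd (3::nat) ^ \<beta>" "0 < (3::nat) ^ \<beta>"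
    by simp_all
  have two_pow: "\<not> 3 dvd (2::nat) ^ k" for k
    using prime_dvd_power[of "3::nat" 2 k] by auto
  show ?thesis
  proof (intro conjI allI impI)
    fix \<alpha> :: nat
    show "Bbar (2 ^ (2 * \<alpha> + 1)) (3 ^ \<beta>) (9 * n + 3 * i) mod 4 = 0"
      using four_dvd_biregular_overpartition_count[OF two_pow[of "2 * \<alpha> + 1"] c(1) n]
      by (simp add: Bbar_eq_overpartition_count dvd_eq_mod_eq_0)
  next
    fix \<alpha> :: nat
    have "(2::nat) ^ (2 * \<alpha>) = 2 ^ \<alpha> * 2 ^ \<alpha>"
      by (simp add: mult_2 power_add)
    then show "Bbar (2 ^ (2 * \<alpha>)) (3 ^ \<beta>) (9 * n + 3 * i) mod 8 = 0"
      using eight_dvd_biregular_overpartition_count[OF two_pow[of \<alpha>] c n]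
      by (simp add: Bbar_eq_overpartition_count dvd_eq_mod_eq_0)
  qed
qed

end
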